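(* Let $n\ge 2$ and let $\mathcal{D}\subseteq\mathcal{M}_{d\times d}(\mathbb{C})$ be the algebra of diagonal matrices. If $\mathcal{A}$ is a maximal subalgebra of $\mathcal{T}_{n,d}(\mathcal{D})$ (an algebra contained in $\mathcal{T}_{n,d}(\mathcal{D})$ not properly contained in any other algebra contained in $\mathcal{T}_{n,d}(\mathcal{D})$), then $\mathcal{A}=\mathcal{F}_{A,B}^{\mathcal{D}}$ for some $A,B\in\mathcal{D}$.
   Context: For positive integers $n,d$, $\mathcal{T}_{n,d}$ denotes the set of block Toeplitz matrices $\mathbf{T}=(T_{p-q})_{p,q=0}^{n-1}$: $nd\times nd$ complex matrices partitioned into $n\times n$ blocks of size $d\times d$, whose $(p,q)$ block is $T_{p-q}$ for some $T_{-(n-1)},\dots,T_{n-1}\in\mathcal{M}_{d\times d}(\mathbb{C})$. For a subalgebra $\mathcal{B}\subseteq\mathcal{M}_{d\times d}(\mathbb{C})$, $\mathcal{T}_{n,d}(\mathcal{B})$ is the set of $\mathbf{T}\in\mathcal{T}_{n,d}$ with all $T_j\in\mathcal{B}$. An algebra contained in a set of matrices is a subset that is a linear subspace closed under matrix multiplication. For $A,B\in\mathcal{M}_{d\times d}(\mathbb{C})$, $$\mathcal{F}_{A,B}^{\mathcal{B}}=\{(T_{p-q})_{p,q=0}^{n-1}\in\mathcal{T}_{n,d}(\mathcal{B}) : AT_j=BT_{j-n}\text{ for } j=1,2,\dots,n-1\}.$$ *)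

theory Defs
  imports Complex_Main "Jordan_Normal_Form.Matrix"
begin

text \<open>An nd x nd matrix M
  is block Toeplitz with blocks T(j) (j an integer, -(n-1) <= j <= n-1, each d x d) if
  its (p,q) block is T(p-q), i.e. entry (i,k) equals entry (i mod d, k mod d) of
  T(i div d - k div d).\<close>

definition block_toeplitz_with :: "nat \<Rightarrow> nat \<Rightarrow> (int \<Rightarrow> complex mat) \<Rightarrow> complex mat \<Rightarrow> bool" where
  "block_toeplitz_with n d T M \<longleftrightarrow>
     M \<in> carrier_mat (n*d) (n*d) \<and>
     (\<forall>j. - (int n - 1) \<le> j \<and> j \<le> int n - 1 \<longrightarrow> T j \<in> carrier_mat d d) \<and>
     (\<forall>i < n*d. \<forall>k < n*d. M $$ (i,k) = T (int (i div d) - int (k div d)) $$ (i mod d, k mod d))"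

definition toeplitz_set :: "nat \<Rightarrow> nat \<Rightarrow> complex mat set \<Rightarrow> complex mat set" where
  "toeplitz_set n d \<B> = {M. \<exists>T. block_toeplitz_with n d T M \<and>
       (\<forall>j. - (int n - 1) \<le> j \<and> j \<le> int n - 1 \<longrightarrow> T j \<in> \<B>)}"

definition diag_alg :: "nat \<Rightarrow> complex mat set" where
  "diag_alg d = {A \<in> carrier_mat d d. diagonal_mat A}"

definition algebra_in :: "nat \<Rightarrow> complex mat set \<Rightarrow> complex mat set \<Rightarrow> bool" where
  "algebra_in N S \<A> \<longleftrightarrow> \<A> \<subseteq> S \<and> \<A> \<subseteq> carrier_mat N N \<and> 0\<^sub>m N N \<in> \<A> \<and>
     (\<forall>X\<in>\<A>. \<forall>Y\<in>\<A>. X + Y \<in> \<A>) \<and>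
     (\<forall>c::complex. \<forall>X\<in>\<A>. c \<cdot>\<^sub>m X \<in> \<A>) \<and>
     (\<forall>X\<in>\<A>. \<forall>Y\<in>\<A>. X * Y \<in> \<A>)"

definition maximal_algebra_in :: "nat \<Rightarrow> complex mat set \<Rightarrow> complex mat set \<Rightarrow> bool" where
  "maximal_algebra_in N S \<A> \<longleftrightarrow> algebra_in N S \<A> \<and>
     \<not> (\<exists>\<B>. algebra_in N S \<B> \<and> \<A> \<subset> \<B>)"

definition F_set :: "nat \<Rightarrow> nat \<Rightarrow> complex mat set \<Rightarrow> complex mat \<Rightarrow> complex mat \<Rightarrow> complex mat set" where
  "F_set n d \<B> A B = {M. \<exists>T. block_toeplitz_with n d T M \<and>
       (\<forall>j. - (int n - 1) \<le> j \<and> j \<le> int n - 1 \<longrightarrow> T j \<in> \<B>) \<and>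
       (\<forall>j. 1 \<le> j \<and> j \<le> int n - 1 \<longrightarrow> A * T j = B * T (j - int n))}"

end

theory Submission
  imports Defs
begin

text \<open>All blocks are diagonal, so everything decouples into \<open>d\<close> scalar problems, one for each
  diagonal position. For scalar sequences \<open>t, s\<close> on \<open>[-(n-1), n-1]\<close> a telescoping identity shows
  that the product of the Toeplitz matrices \<open>(t(p-q))\<close> and \<open>(s(p-q))\<close> is again Toeplitz iff
  \<open>t(i) s(j-n) = t(i-n) s(j)\<close> for all \<open>1 \<le> i, j \<le> n-1\<close>. When this holds for all pairs of members
  of an algebra, the vectors \<open>(t(j))\<close> and \<open>(t(j-n))\<close>, \<open>j = 1..n-1\<close>, are proportional with one ratio
  \<open>[a : b]\<close> common to all members, so the algebra lies in \<open>F_set\<close> for \<open>A = diag a\<close>, \<open>B = diag b\<close>.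
  Conversely, if \<open>(a, b) \<noteq> (0, 0)\<close> at every position, proportionality forces the cross condition
  and is inherited by products, so this \<open>F_set\<close> is itself an algebra and maximality gives equality.\<close>

lemma sum_lessThan_mult_split:
  fixes f :: "nat \<Rightarrow> 'a::comm_monoid_add"
  shows "(\<Sum>k<n*d. f k) = (\<Sum>r<n. \<Sum>c<d. f (r*d + c))"
proof -
  have "(\<Sum>k<n*d. f k) = (\<Sum>r<n. sum f {r*d..<r*d + d})"
    using sum.nat_group[of f d n] by simp
  also have "\<dots> = (\<Sum>r<n. \<Sum>c<d. f (r*d + c))"
  proof (rule sum.cong[OF refl])
    fix r
    have "sum f {r*d..<r*d + d} = sum f {0 + r*d..<d + r*d}" by (simp add: add.commute)
    also have "\<dots> = (\<Sum>c\<in>{0..<d}. f (c + r*d))" by (rule sum.shift_bounds_nat_ivl)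
    finally show "sum f {r*d..<r*d + d} = (\<Sum>c<d. f (r*d + c))"
      by (simp add: atLeast0LessThan add.commute)
  qed
  finally show ?thesis .
qed

lemma sum_lessThan_telescope_int:
  fixes f :: "int \<Rightarrow> 'a::comm_monoid_add"
  shows "(\<Sum>r<n. f (int r - 1)) + f (int n - 1) = f (-1) + (\<Sum>r<n. f (int r))"
  by (induction n) (simp_all add: add.assoc add.left_commute)

subsection \<open>Products of scalar Toeplitz matrices\<close>

definition toeplitz_mult_entry :: "nat \<Rightarrow> (int \<Rightarrow> 'a::comm_semiring_1) \<Rightarrow> (int \<Rightarrow> 'a) \<Rightarrow> int \<Rightarrow> int \<Rightarrow> 'a"
  where "toeplitz_mult_entry n t s p q = (\<Sum>r<n. t (p - int r) * s (int r - q))"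

definition toeplitz_cross_cond :: "nat \<Rightarrow> (int \<Rightarrow> 'a::times) \<Rightarrow> (int \<Rightarrow> 'a) \<Rightarrow> bool"
  where "toeplitz_cross_cond n t s \<longleftrightarrow>
    (\<forall>i j. 1 \<le> i \<and> i \<le> int n - 1 \<and> 1 \<le> j \<and> j \<le> int n - 1 \<longrightarrow> t i * s (j - int n) = t (i - int n) * s j)"

definition shift_proportional :: "nat \<Rightarrow> 'a::times \<Rightarrow> 'a \<Rightarrow> (int \<Rightarrow> 'a) \<Rightarrow> bool"
  where "shift_proportional n a b t \<longleftrightarrow> (\<forall>j. 1 \<le> j \<and> j \<le> int n - 1 \<longrightarrow> a * t j = b * t (j - int n))"

lemma toeplitz_mult_entry_shift:
  "toeplitz_mult_entry n t s (p + 1) (q + 1) + t (p + 1 - int n) * s (int n - 1 - q)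
     = toeplitz_mult_entry n t s p q + t (p + 1) * s (-1 - q)"
proof -
  have "(\<Sum>r<n. (\<lambda>x. t (p - x) * s (x - q)) (int r - 1)) + (\<lambda>x. t (p - x) * s (x - q)) (int n - 1)
     = (\<lambda>x. t (p - x) * s (x - q)) (-1) + (\<Sum>r<n. (\<lambda>x. t (p - x) * s (x - q)) (int r))"
    by (rule sum_lessThan_telescope_int)
  then show ?thesis
    unfolding toeplitz_mult_entry_def by (simp add: algebra_simps)
qed

lemma toeplitz_mult_entry_shift_eq_iff:
  fixes t s :: "int \<Rightarrow> 'a::comm_ring_1"
  shows "toeplitz_mult_entry n t s (p + 1) (q + 1) = toeplitz_mult_entry n t s p q
     \<longleftrightarrow> t (p + 1) * s (-1 - q) = t (p + 1 - int n) * s (int n - 1 - q)"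
  using toeplitz_mult_entry_shift[of n t s p q] by (auto simp: algebra_simps)

lemma toeplitz_mult_entry_shift_invariant_iff:
  fixes t s :: "int \<Rightarrow> 'a::comm_ring_1"
  shows "(\<forall>p q. p + 1 < n \<and> q + 1 < n \<longrightarrow>
            toeplitz_mult_entry n t s (int p + 1) (int q + 1) = toeplitz_mult_entry n t s (int p) (int q))
     \<longleftrightarrow> toeplitz_cross_cond n t s"
  unfolding toeplitz_mult_entry_shift_eq_iff toeplitz_cross_cond_def
proof (intro iffI allI impI)
  fix i j :: int
  assume inv: "\<forall>p q. p + 1 < n \<and> q + 1 < n \<longrightarrow>
    t (int p + 1) * s (- 1 - int q) = t (int p + 1 - int n) * s (int n - 1 - int q)"
    and ij: "1 \<le> i \<and> i \<le> int n - 1 \<and> 1 \<le> j \<and> j \<le> int n - 1"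
  have "nat i - 1 + 1 < n" "n - 1 - nat j + 1 < n"
    and i: "int (nat i - 1) + 1 = i" and j: "int (n - 1 - nat j) = int n - 1 - j"
    using ij by auto
  then show "t i * s (j - int n) = t (i - int n) * s j"
    using inv[rule_format, of "nat i - 1" "n - 1 - nat j"] by simp
next
  fix p q :: nat
  assume cross: "\<forall>i j. 1 \<le> i \<and> i \<le> int n - 1 \<and> 1 \<le> j \<and> j \<le> int n - 1 \<longrightarrow>
    t i * s (j - int n) = t (i - int n) * s j" and pq: "p + 1 < n \<and> q + 1 < n"
  then show "t (int p + 1) * s (- 1 - int q) = t (int p + 1 - int n) * s (int n - 1 - int q)"
    using cross[rule_format, of "int p + 1" "int n - 1 - int q"] by simp
qed

lemma toeplitz_cross_cond_if_shift_proportional: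
  fixes t s :: "int \<Rightarrow> 'a::field"
  assumes ab: "a \<noteq> 0 \<or> b \<noteq> 0"
    and t: "shift_proportional n a b t" and s: "shift_proportional n a b s"
  shows "toeplitz_cross_cond n t s"
  unfolding toeplitz_cross_cond_def
proof (intro allI impI)
  fix i j assume ij: "1 \<le> i \<and> i \<le> int n - 1 \<and> 1 \<le> j \<and> j \<le> int n - 1"
  have ti: "a * t i = b * t (i - int n)" and sj: "a * s j = b * s (j - int n)"
    using t s ij unfolding shift_proportional_def by auto
  show "t i * s (j - int n) = t (i - int n) * s j"
  proof (cases "a = 0")
    case False
    have "a * (t i * s (j - int n)) = t (i - int n) * (b * s (j - int n))"
      using ti by (simp add: algebra_simps)
    also have "\<dots> = a * (t (i - int n) * s j)" using sj by simp
    finally show ?thesis using False by simp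
  next
    case True
    with ab ti sj have "t (i - int n) = 0" "s (j - int n) = 0" by auto
    then show ?thesis by simp
  qed
qed

text \<open>The reindexing \<open>k \<mapsto> k - j mod n\<close> matches each term \<open>t\<^sub>j\<^sub>-\<^sub>k s\<^sub>k\<close> with a term of the other
  sum, using the proportionality of \<open>t\<close> for \<open>k < j\<close> and of \<open>s\<close> for \<open>k \<ge> j\<close>.\<close>

lemma toeplitz_mult_entry_shift_proportional:
  fixes t s :: "int \<Rightarrow> 'a::comm_ring_1"
  assumes t: "shift_proportional n a b t" and s: "shift_proportional n a b s"
    and j: "1 \<le> j" "j \<le> int n - 1"
  shows "a * toeplitz_mult_entry n t s j 0 = b * toeplitz_mult_entry n t s 0 (int n - j)"
proof -
  define p where "p = nat j"
  have p: "1 \<le> p" "p < n" "j = int p" using j unfolding p_def by auto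
  have rt: "a * t i = b * t (i - int n)" and rs: "a * s i = b * s (i - int n)"
    if "1 \<le> i" "i \<le> int n - 1" for i
    using t s that unfolding shift_proportional_def by auto
  have "(\<Sum>k<n. a * (t (int p - int k) * s (int k)))
       = (\<Sum>k<n. b * (t (- int k) * s (int k + int p - int n)))"
  proof (rule sum.reindex_bij_witness[where j="\<lambda>k. if p \<le> k then k - p else k + n - p"
        and i="\<lambda>k. if k + p < n then k + p else k + p - n"])
    fix k assume k: "k \<in> {..<n}"
    show "(if (if p \<le> k then k - p else k + n - p) + p < n then (if p \<le> k then k - p else k + n - p) + p
           else (if p \<le> k then k - p else k + n - p) + p - n) = k"
      "(if p \<le> k then k - p else k + n - p) \<in> {..<n}" using k p by auto
    show "b * (t (- int (if p \<le> k then k - p else k + n - p)) *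
             s (int (if p \<le> k then k - p else k + n - p) + int p - int n))
          = a * (t (int p - int k) * s (int k))"
    proof (cases "p \<le> k")
      case True
      have "a * s (int k) = b * s (int k - int n)" using rs[of "int k"] True k p by simp
      then show ?thesis using True by (simp add: of_nat_diff) (metis mult.left_commute)
    next
      case False
      have "a * t (int p - int k) = b * t (int p - int k - int n)"
        using rt[of "int p - int k"] False k p by simp
      then show ?thesis using False p by (simp add: of_nat_diff algebra_simps) (metis mult.left_commute)
    qed
  next
    fix k assume k: "k \<in> {..<n}"
    show "(if (if k + p < n then k + p else k + p - n) \<ge> p then (if k + p < n then k + p else k + p - n) - p
           else (if k + p < n then k + p else k + p - n) + n - p) = k"
      "(if k + p < n then k + p else k + p - n) \<in> {..<n}" using k p by auto
  qed
  then show ?thesis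
    unfolding toeplitz_mult_entry_def p(3) by (simp add: sum_distrib_left algebra_simps)
qed

lemma shift_invariant_reduce:
  fixes h :: "nat \<Rightarrow> nat \<Rightarrow> 'a"
  assumes "\<And>p q. p + 1 < n \<Longrightarrow> q + 1 < n \<Longrightarrow> h (p + 1) (q + 1) = h p q"
  shows "p < n \<Longrightarrow> q < n \<Longrightarrow> h p q = (if q \<le> p then h (p - q) 0 else h 0 (q - p))"
proof (induction q arbitrary: p)
  case 0 then show ?case by simp
next
  case (Suc q)
  show ?case
  proof (cases p)
    case 0 then show ?thesis by simp
  next
    case (Suc p')
    have "h p (Suc q) = h p' q" using assms[of p' q] Suc \<open>Suc q < n\<close> \<open>p < n\<close> by simp
    also have "\<dots> = (if q \<le> p' then h (p' - q) 0 else h 0 (q - p'))" using Suc.IH Suc.prems Suc by simp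
    finally show ?thesis using Suc by simp
  qed
qed

lemma toeplitz_mult_entry_reduce:
  fixes t s :: "int \<Rightarrow> 'a::comm_ring_1"
  assumes "toeplitz_cross_cond n t s" "p < n" "q < n"
  shows "toeplitz_mult_entry n t s (int p) (int q)
       = toeplitz_mult_entry n t s (max (int p - int q) 0) (max (int q - int p) 0)"
proof -
  have "toeplitz_mult_entry n t s (int (p + 1)) (int (q + 1)) = toeplitz_mult_entry n t s (int p) (int q)"
    if "p + 1 < n" "q + 1 < n" for p q
    using assms(1) that unfolding toeplitz_mult_entry_shift_invariant_iff[symmetric]
    by (simp add: add.commute)
  from shift_invariant_reduce[where h="\<lambda>p q. toeplitz_mult_entry n t s (int p) (int q)", OF this assms(2,3)]
  show ?thesis by (auto simp: of_nat_diff)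
qed

lemma exists_common_ratio:
  fixes u v :: "'x \<Rightarrow> 'i \<Rightarrow> 'a::field"
  assumes "\<And>x y i j. x \<in> X \<Longrightarrow> y \<in> X \<Longrightarrow> i \<in> I \<Longrightarrow> j \<in> I \<Longrightarrow> u x i * v y j = v x i * u y j"
  shows "\<exists>a b. (a \<noteq> 0 \<or> b \<noteq> 0) \<and> (\<forall>x\<in>X. \<forall>i\<in>I. a * u x i = b * v x i)"
proof (cases "\<exists>x0\<in>X. \<exists>i0\<in>I. u x0 i0 \<noteq> 0")
  case True
  then obtain x0 i0 where h: "x0 \<in> X" "i0 \<in> I" "u x0 i0 \<noteq> 0" by blast
  show ?thesis
  proof (intro exI conjI)
    show "v x0 i0 \<noteq> 0 \<or> u x0 i0 \<noteq> 0" using h by simp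
    show "\<forall>x\<in>X. \<forall>i\<in>I. v x0 i0 * u x i = u x0 i0 * v x i"
      using assms h by (metis mult.commute)
  qed
next
  case False
  then show ?thesis by (intro exI[of _ 1] exI[of _ 0]) auto
qed

subsection \<open>Block Toeplitz matrices with diagonal blocks\<close>

lemma block_index_less: "p < n \<Longrightarrow> c < (d::nat) \<Longrightarrow> p*d + c < n*d"
proof -
  assume "p < n" "c < d"
  then have "p*d + c < (p + 1)*d" by simp
  also have "\<dots> \<le> n*d" using \<open>p < n\<close> by (intro mult_right_mono) auto
  finally show ?thesis .
qed

lemma block_toeplitz_entry:
  assumes "block_toeplitz_with n d T M" "p < n" "q < n" "c < d" "c' < d"
  shows "M $$ (p*d + c, q*d + c') = T (int p - int q) $$ (c, c')"
proof -
  have "M $$ (p*d + c, q*d + c')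
      = T (int ((p*d + c) div d) - int ((q*d + c') div d)) $$ ((p*d + c) mod d, (q*d + c') mod d)"
    using assms block_index_less unfolding block_toeplitz_with_def by blast
  then show ?thesis using assms by simp
qed

lemma block_toeplitz_index_range:
  assumes "i < n*d" "k < n*d"
  shows "- (int n - 1) \<le> int (i div d) - int (k div d) \<and> int (i div d) - int (k div d) \<le> int n - 1"
proof -
  have "i div d < n" "k div d < n" using assms less_mult_imp_div_less by auto
  then show ?thesis by auto
qed

lemma mod_less_of_less_mult: "i < n*d \<Longrightarrow> i mod d < (d::nat)"
  by (cases "d = 0") auto

lemma block_toeplitz_zero: "block_toeplitz_with n d (\<lambda>j. 0\<^sub>m d d) (0\<^sub>m (n*d) (n*d))"
  unfolding block_toeplitz_with_def using mod_less_of_less_mult by auto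

lemma block_toeplitz_add:
  assumes "block_toeplitz_with n d T M" "block_toeplitz_with n d S N"
  shows "block_toeplitz_with n d (\<lambda>j. T j + S j) (M + N)"
  unfolding block_toeplitz_with_def
proof (intro conjI allI impI)
  show "M + N \<in> carrier_mat (n*d) (n*d)" using assms unfolding block_toeplitz_with_def by auto
  fix j assume "- (int n - 1) \<le> j \<and> j \<le> int n - 1"
  then show "T j + S j \<in> carrier_mat d d" using assms unfolding block_toeplitz_with_def by auto
next
  fix i k assume ik: "i < n*d" "k < n*d"
  have "T (int (i div d) - int (k div d)) \<in> carrier_mat d d"
    "S (int (i div d) - int (k div d)) \<in> carrier_mat d d"
    using block_toeplitz_index_range[OF ik] assms unfolding block_toeplitz_with_def by blast+
  then show "(M + N) $$ (i, k) = (T (int (i div d) - int (k div d)) + S (int (i div d) - int (k div d))) $$ (i mod d, k mod d)"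
    using assms ik mod_less_of_less_mult[OF ik(1)] mod_less_of_less_mult[OF ik(2)]
    unfolding block_toeplitz_with_def by auto
qed

lemma block_toeplitz_smult:
  assumes "block_toeplitz_with n d T M"
  shows "block_toeplitz_with n d (\<lambda>j. x \<cdot>\<^sub>m T j) (x \<cdot>\<^sub>m M)"
  unfolding block_toeplitz_with_def
proof (intro conjI allI impI)
  show "x \<cdot>\<^sub>m M \<in> carrier_mat (n*d) (n*d)" using assms unfolding block_toeplitz_with_def by auto
  fix j assume "- (int n - 1) \<le> j \<and> j \<le> int n - 1"
  then show "x \<cdot>\<^sub>m T j \<in> carrier_mat d d" using assms unfolding block_toeplitz_with_def by auto
next
  fix i k assume ik: "i < n*d" "k < n*d"
  have "T (int (i div d) - int (k div d)) \<in> carrier_mat d d"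
    using block_toeplitz_index_range[OF ik] assms unfolding block_toeplitz_with_def by blast
  then show "(x \<cdot>\<^sub>m M) $$ (i, k) = (x \<cdot>\<^sub>m T (int (i div d) - int (k div d))) $$ (i mod d, k mod d)"
    using assms ik mod_less_of_less_mult[OF ik(1)] mod_less_of_less_mult[OF ik(2)]
    unfolding block_toeplitz_with_def by auto
qed

lemma diag_alg_offdiag: "X \<in> diag_alg d \<Longrightarrow> c < d \<Longrightarrow> c' < d \<Longrightarrow> c \<noteq> c' \<Longrightarrow> X $$ (c, c') = 0"
  unfolding diag_alg_def diagonal_mat_def by auto

lemma zero_mem_diag_alg: "0\<^sub>m d d \<in> diag_alg d"
  unfolding diag_alg_def diagonal_mat_def by auto

lemma diag_alg_add: "X \<in> diag_alg d \<Longrightarrow> Y \<in> diag_alg d \<Longrightarrow> X + Y \<in> diag_alg d"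
  unfolding diag_alg_def diagonal_mat_def by auto

lemma diag_alg_smult: "X \<in> diag_alg d \<Longrightarrow> x \<cdot>\<^sub>m X \<in> diag_alg d"
  unfolding diag_alg_def diagonal_mat_def by auto

lemma mat_diag_mem_diag_alg: "mat_diag d f \<in> diag_alg d"
  unfolding mat_diag_def diag_alg_def diagonal_mat_def by auto

lemma diag_alg_eq_mat_diag: "X \<in> diag_alg d \<Longrightarrow> X = mat_diag d (\<lambda>c. X $$ (c, c))"
  unfolding diag_alg_def diagonal_mat_def mat_diag_def by (auto intro!: eq_matI)

lemma mat_diag_eq_iff: "mat_diag d f = mat_diag d g \<longleftrightarrow> (\<forall>c<d. f c = g c)"
  unfolding mat_diag_def by (auto simp: mat_eq_iff)

lemma mat_diag_mult_eq_iff: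
  assumes "X \<in> diag_alg d" "Y \<in> diag_alg d"
  shows "mat_diag d a * X = mat_diag d b * Y \<longleftrightarrow> (\<forall>c<d. a c * X $$ (c, c) = b c * Y $$ (c, c))"
proof -
  have "mat_diag d a * X = mat_diag d (\<lambda>c. a c * X $$ (c, c))"
    using mat_diag_diag[of d a "\<lambda>c. X $$ (c, c)"] diag_alg_eq_mat_diag[OF assms(1)] by metis
  moreover have "mat_diag d b * Y = mat_diag d (\<lambda>c. b c * Y $$ (c, c))"
    using mat_diag_diag[of d b "\<lambda>c. Y $$ (c, c)"] diag_alg_eq_mat_diag[OF assms(2)] by metis
  ultimately show ?thesis by (simp add: mat_diag_eq_iff)
qed
definition diag_blocks :: "nat \<Rightarrow> nat \<Rightarrow> (int \<Rightarrow> complex mat) \<Rightarrow> bool"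
  where "diag_blocks n d T \<longleftrightarrow> (\<forall>j. - (int n - 1) \<le> j \<and> j \<le> int n - 1 \<longrightarrow> T j \<in> diag_alg d)"

lemma mem_toeplitz_set_diag_alg_iff:
  "M \<in> toeplitz_set n d (diag_alg d) \<longleftrightarrow> (\<exists>T. block_toeplitz_with n d T M \<and> diag_blocks n d T)"
  unfolding toeplitz_set_def diag_blocks_def by blast

lemma block_toeplitz_mult_entry:
  assumes M: "block_toeplitz_with n d T M" and N: "block_toeplitz_with n d S N"
    and TD: "diag_blocks n d T" and SD: "diag_blocks n d S"
    and pq: "p < n" "q < n" "c < d" "c' < d"
  shows "(M * N) $$ (p*d + c, q*d + c') = (if c = c'
    then toeplitz_mult_entry n (\<lambda>j. T j $$ (c, c)) (\<lambda>j. S j $$ (c, c)) (int p) (int q) else 0)"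
proof -
  have diag: "T (int p - int r) \<in> diag_alg d" "S (int r - int q) \<in> diag_alg d" if "r < n" for r
    using TD SD that pq unfolding diag_blocks_def by auto
  have off: "T (int p - int r) $$ (c, c'') = 0" if "r < n" "c'' < d" "c'' \<noteq> c" for r c''
    using diag_alg_offdiag[OF diag(1)] that pq by auto
  have off': "S (int r - int q) $$ (c, c') = 0" if "r < n" "c \<noteq> c'" for r
    using diag_alg_offdiag[OF diag(2)] that pq by auto
  have "M \<in> carrier_mat (n*d) (n*d)" "N \<in> carrier_mat (n*d) (n*d)"
    using M N unfolding block_toeplitz_with_def by auto
  then have "(M * N) $$ (p*d + c, q*d + c') = (\<Sum>k<n*d. M $$ (p*d + c, k) * N $$ (k, q*d + c'))"
    using block_index_less pq by (simp add: scalar_prod_def atLeast0LessThan)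
  also have "\<dots> = (\<Sum>r<n. \<Sum>c''<d. T (int p - int r) $$ (c, c'') * S (int r - int q) $$ (c'', c'))"
    unfolding sum_lessThan_mult_split
    using block_toeplitz_entry[OF M] block_toeplitz_entry[OF N] pq by (intro sum.cong) auto
  also have "\<dots> = (\<Sum>r<n. T (int p - int r) $$ (c, c) * S (int r - int q) $$ (c, c'))"
    using off pq by (intro sum.cong refl, subst sum.remove[of _ c]) (auto intro!: sum.neutral)
  also have "\<dots> = (if c = c'
    then toeplitz_mult_entry n (\<lambda>j. T j $$ (c, c)) (\<lambda>j. S j $$ (c, c)) (int p) (int q) else 0)"
    using off' unfolding toeplitz_mult_entry_def by auto
  finally show ?thesis .
qed

text \<open>Under the cross condition the product entry depends only on \<open>p - q\<close>, so the block on
  diagonal \<open>j\<close> can be taken from the first block column (\<open>j \<ge> 0\<close>) or row (\<open>j < 0\<close>).\<close>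

lemma block_toeplitz_mult:
  assumes M: "block_toeplitz_with n d T M" and N: "block_toeplitz_with n d S N"
    and TD: "diag_blocks n d T" and SD: "diag_blocks n d S"
    and cross: "\<And>c. c < d \<Longrightarrow> toeplitz_cross_cond n (\<lambda>j. T j $$ (c, c)) (\<lambda>j. S j $$ (c, c))"
  shows "block_toeplitz_with n d (\<lambda>j. mat_diag d (\<lambda>c.
    toeplitz_mult_entry n (\<lambda>j. T j $$ (c, c)) (\<lambda>j. S j $$ (c, c)) (max j 0) (max (- j) 0))) (M * N)"
  unfolding block_toeplitz_with_def
proof (intro conjI allI impI)
  show "M * N \<in> carrier_mat (n*d) (n*d)" using M N unfolding block_toeplitz_with_def by auto
next
  fix i k assume ik: "i < n*d" "k < n*d"
  define p c q c' where "p = i div d" "c = i mod d" "q = k div d" "c' = k mod d"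
  have pc: "p < n" "q < n" "c < d" "c' < d"
    using ik less_mult_imp_div_less mod_less_of_less_mult unfolding p_c_q_c'_def by auto
  have "i = p*d + c" "k = q*d + c'" unfolding p_c_q_c'_def by auto
  then show "(M * N) $$ (i, k) = mat_diag d (\<lambda>c.
      toeplitz_mult_entry n (\<lambda>j. T j $$ (c, c)) (\<lambda>j. S j $$ (c, c))
        (max (int (i div d) - int (k div d)) 0) (max (- (int (i div d) - int (k div d))) 0))
      $$ (i mod d, k mod d)"
    using block_toeplitz_mult_entry[OF M N TD SD pc] toeplitz_mult_entry_reduce[OF cross pc(1,2)] pc
    unfolding p_c_q_c'_def[symmetric] by (simp add: mat_diag_def)
qed (simp add: mat_diag_def)

lemma toeplitz_cross_cond_if_mult_block_toeplitz:
  assumes M: "block_toeplitz_with n d T M" and N: "block_toeplitz_with n d S N"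
    and TD: "diag_blocks n d T" and SD: "diag_blocks n d S"
    and R: "block_toeplitz_with n d R (M * N)" and c: "c < d"
  shows "toeplitz_cross_cond n (\<lambda>j. T j $$ (c, c)) (\<lambda>j. S j $$ (c, c))"
  unfolding toeplitz_mult_entry_shift_invariant_iff[symmetric]
proof (intro allI impI)
  fix p q assume pq: "p + 1 < n \<and> q + 1 < n"
  have "(M * N) $$ ((p + 1)*d + c, (q + 1)*d + c) = (M * N) $$ (p*d + c, q*d + c)"
    using block_toeplitz_entry[OF R, of "p + 1" "q + 1" c c] block_toeplitz_entry[OF R, of p q c c] pq c
    by simp
  then show "toeplitz_mult_entry n (\<lambda>j. T j $$ (c, c)) (\<lambda>j. S j $$ (c, c)) (int p + 1) (int q + 1)
      = toeplitz_mult_entry n (\<lambda>j. T j $$ (c, c)) (\<lambda>j. S j $$ (c, c)) (int p) (int q)"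
    using block_toeplitz_mult_entry[OF M N TD SD, of "p + 1" "q + 1" c c]
      block_toeplitz_mult_entry[OF M N TD SD, of p q c c] pq c
    by (simp add: add.commute)
qed

subsection \<open>The algebras \<open>F_set\<close> for diagonal \<open>A, B\<close>\<close>

lemma shift_proportional_cong:
  assumes "shift_proportional n a b t" "\<And>j. - (int n - 1) \<le> j \<Longrightarrow> j \<le> int n - 1 \<Longrightarrow> t j = t' j"
  shows "shift_proportional n a b t'"
  using assms unfolding shift_proportional_def by auto

lemma shift_proportional_add:
  fixes t s :: "int \<Rightarrow> 'a::comm_semiring_1"
  shows "shift_proportional n a b t \<Longrightarrow> shift_proportional n a b s
    \<Longrightarrow> shift_proportional n a b (\<lambda>j. t j + s j)"
  unfolding shift_proportional_def by (simp add: distrib_left)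

lemma shift_proportional_smult:
  fixes t :: "int \<Rightarrow> 'a::comm_semiring_1"
  shows "shift_proportional n a b t \<Longrightarrow> shift_proportional n a b (\<lambda>j. x * t j)"
  unfolding shift_proportional_def by (metis mult.left_commute)

lemma mem_F_set_mat_diag_iff:
  "M \<in> F_set n d (diag_alg d) (mat_diag d a) (mat_diag d b) \<longleftrightarrow>
    (\<exists>T. block_toeplitz_with n d T M \<and> diag_blocks n d T \<and>
      (\<forall>c<d. shift_proportional n (a c) (b c) (\<lambda>j. T j $$ (c, c))))"
proof -
  have "(\<forall>j. 1 \<le> j \<and> j \<le> int n - 1 \<longrightarrow> mat_diag d a * T j = mat_diag d b * T (j - int n))
     \<longleftrightarrow> (\<forall>c<d. shift_proportional n (a c) (b c) (\<lambda>j. T j $$ (c, c)))"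
    if "diag_blocks n d T" for T
  proof -
    have "T j \<in> diag_alg d" "T (j - int n) \<in> diag_alg d" if "1 \<le> j" "j \<le> int n - 1" for j
      using \<open>diag_blocks n d T\<close> that unfolding diag_blocks_def by auto
    then show ?thesis unfolding shift_proportional_def by (auto simp: mat_diag_mult_eq_iff)
  qed
  then show ?thesis unfolding F_set_def diag_blocks_def[symmetric] by blast
qed

lemma F_set_mat_diag_mult_closed:
  assumes ab: "\<And>c. c < d \<Longrightarrow> a c \<noteq> 0 \<or> b c \<noteq> 0"
    and "M \<in> F_set n d (diag_alg d) (mat_diag d a) (mat_diag d b)"
    and "N \<in> F_set n d (diag_alg d) (mat_diag d a) (mat_diag d b)"
  shows "M * N \<in> F_set n d (diag_alg d) (mat_diag d a) (mat_diag d b)"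
proof -
  obtain T where T: "block_toeplitz_with n d T M" "diag_blocks n d T"
    and TP: "\<And>c. c < d \<Longrightarrow> shift_proportional n (a c) (b c) (\<lambda>j. T j $$ (c, c))"
    using assms(2) unfolding mem_F_set_mat_diag_iff by blast
  obtain S where S: "block_toeplitz_with n d S N" "diag_blocks n d S"
    and SP: "\<And>c. c < d \<Longrightarrow> shift_proportional n (a c) (b c) (\<lambda>j. S j $$ (c, c))"
    using assms(3) unfolding mem_F_set_mat_diag_iff by blast
  define e where "e c = toeplitz_mult_entry n (\<lambda>j. T j $$ (c, c)) (\<lambda>j. S j $$ (c, c))" for c
  define R where "R j = mat_diag d (\<lambda>c. e c (max j 0) (max (- j) 0))" for j
  have "block_toeplitz_with n d R (M * N)"
    unfolding R_def e_def
    using block_toeplitz_mult[OF T(1) S(1) T(2) S(2) toeplitz_cross_cond_if_shift_proportional]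
      ab TP SP by blast
  moreover have "diag_blocks n d R"
    unfolding diag_blocks_def R_def by (simp add: mat_diag_mem_diag_alg)
  moreover have "shift_proportional n (a c) (b c) (\<lambda>j. R j $$ (c, c))" if c: "c < d" for c
    unfolding shift_proportional_def
  proof (intro allI impI)
    fix j assume j: "1 \<le> j \<and> j \<le> int n - 1"
    have "a c * e c j 0 = b c * e c 0 (int n - j)"
      unfolding e_def using toeplitz_mult_entry_shift_proportional TP SP c j by blast
    then show "a c * R j $$ (c, c) = b c * R (j - int n) $$ (c, c)"
      using c j unfolding R_def by (simp add: mat_diag_def)
  qed
  ultimately show ?thesis unfolding mem_F_set_mat_diag_iff by blast
qed

lemma F_set_mat_diag_algebra:
  assumes ab: "\<And>c. c < d \<Longrightarrow> a c \<noteq> 0 \<or> b c \<noteq> 0"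
  shows "algebra_in (n*d) (toeplitz_set n d (diag_alg d)) (F_set n d (diag_alg d) (mat_diag d a) (mat_diag d b))"
  unfolding algebra_in_def
proof (intro conjI ballI allI)
  let ?F = "F_set n d (diag_alg d) (mat_diag d a) (mat_diag d b)"
  show "?F \<subseteq> toeplitz_set n d (diag_alg d)" unfolding F_set_def toeplitz_set_def by blast
  show "?F \<subseteq> carrier_mat (n*d) (n*d)" unfolding F_set_def block_toeplitz_with_def by blast
  show "0\<^sub>m (n*d) (n*d) \<in> ?F"
    unfolding mem_F_set_mat_diag_iff diag_blocks_def shift_proportional_def
    using block_toeplitz_zero zero_mem_diag_alg by fastforce
  fix X Y assume X: "X \<in> ?F" and Y: "Y \<in> ?F"
  show "X * Y \<in> ?F" by (rule F_set_mat_diag_mult_closed[OF ab X Y])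
  obtain T where T: "block_toeplitz_with n d T X" "diag_blocks n d T"
    and TP: "\<And>c. c < d \<Longrightarrow> shift_proportional n (a c) (b c) (\<lambda>j. T j $$ (c, c))"
    using X unfolding mem_F_set_mat_diag_iff by blast
  obtain S where S: "block_toeplitz_with n d S Y" "diag_blocks n d S"
    and SP: "\<And>c. c < d \<Longrightarrow> shift_proportional n (a c) (b c) (\<lambda>j. S j $$ (c, c))"
    using Y unfolding mem_F_set_mat_diag_iff by blast
  have "shift_proportional n (a c) (b c) (\<lambda>j. (T j + S j) $$ (c, c))" if "c < d" for c
    using shift_proportional_add[OF TP SP, OF that that] T(2) S(2) that
    by (elim shift_proportional_cong) (auto simp: diag_blocks_def diag_alg_def)
  moreover have "diag_blocks n d (\<lambda>j. T j + S j)"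
    using T(2) S(2) diag_alg_add unfolding diag_blocks_def by blast
  ultimately show "X + Y \<in> ?F"
    unfolding mem_F_set_mat_diag_iff using block_toeplitz_add[OF T(1) S(1)] by blast
next
  let ?F = "F_set n d (diag_alg d) (mat_diag d a) (mat_diag d b)"
  fix x :: complex and X assume X: "X \<in> ?F"
  obtain T where T: "block_toeplitz_with n d T X" "diag_blocks n d T"
    and TP: "\<And>c. c < d \<Longrightarrow> shift_proportional n (a c) (b c) (\<lambda>j. T j $$ (c, c))"
    using X unfolding mem_F_set_mat_diag_iff by blast
  have "shift_proportional n (a c) (b c) (\<lambda>j. (x \<cdot>\<^sub>m T j) $$ (c, c))" if "c < d" for c
    using shift_proportional_smult[OF TP, OF that, of x] T(2) that
    by (elim shift_proportional_cong) (auto simp: diag_blocks_def diag_alg_def)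
  moreover have "diag_blocks n d (\<lambda>j. x \<cdot>\<^sub>m T j)"
    using T(2) diag_alg_smult unfolding diag_blocks_def by blast
  ultimately show "x \<cdot>\<^sub>m X \<in> ?F"
    unfolding mem_F_set_mat_diag_iff using block_toeplitz_smult[OF T(1)] by blast
qed

text \<open>Reads the \<open>c\<close>-th diagonal entry of the block \<open>T\<^sub>j\<close> off the first block column (\<open>j \<ge> 0\<close>) or
  row (\<open>j < 0\<close>) of \<open>M\<close>, so that it does not depend on a choice of \<open>T\<close>.\<close>

definition diag_symbol :: "nat \<Rightarrow> complex mat \<Rightarrow> int \<Rightarrow> nat \<Rightarrow> complex"
  where "diag_symbol d M j c = (if 0 \<le> j then M $$ (nat j * d + c, c) else M $$ (c, nat (- j) * d + c))"

lemma diag_symbol_block_toeplitz: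
  assumes "block_toeplitz_with n d T M" "- (int n - 1) \<le> j" "j \<le> int n - 1" "c < d"
  shows "diag_symbol d M j c = T j $$ (c, c)"
proof (cases "0 \<le> j")
  case True
  then have "nat j < n" using assms by linarith
  then show ?thesis
    using block_toeplitz_entry[OF assms(1), of "nat j" 0 c c] True assms(4) unfolding diag_symbol_def by simp
next
  case False
  then have "nat (- j) < n" using assms by linarith
  then show ?thesis
    using block_toeplitz_entry[OF assms(1), of 0 "nat (- j)" c c] False assms(4) unfolding diag_symbol_def by simp
qed

lemma algebra_subset_F_set_mat_diag:
  assumes alg: "algebra_in (n*d) (toeplitz_set n d (diag_alg d)) \<A>"
  shows "\<exists>a b. (\<forall>c<d. a c \<noteq> 0 \<or> b c \<noteq> 0) \<and> \<A> \<subseteq> F_set n d (diag_alg d) (mat_diag d a) (mat_diag d b)"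
proof -
  have blocks: "\<exists>T. block_toeplitz_with n d T M \<and> diag_blocks n d T" if "M \<in> \<A>" for M
    using alg that unfolding algebra_in_def mem_toeplitz_set_diag_alg_iff[symmetric] by blast
  have symbol: "diag_symbol d M j c = T j $$ (c, c)"
    if "block_toeplitz_with n d T M" "c < d" "1 \<le> j \<and> j \<le> int n - 1 \<or> 1 - int n \<le> j \<and> j \<le> -1" for M T j c
    using diag_symbol_block_toeplitz that by auto
  have cross: "toeplitz_cross_cond n (\<lambda>j. diag_symbol d M j c) (\<lambda>j. diag_symbol d N j c)"
    if MN: "M \<in> \<A>" "N \<in> \<A>" and c: "c < d" for M N c
  proof -
    obtain T S where T: "block_toeplitz_with n d T M" "diag_blocks n d T"
      and S: "block_toeplitz_with n d S N" "diag_blocks n d S"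
      using blocks MN by blast
    have "M * N \<in> \<A>" using alg MN unfolding algebra_in_def by blast
    then obtain R where "block_toeplitz_with n d R (M * N)" using blocks by blast
    then have "toeplitz_cross_cond n (\<lambda>j. T j $$ (c, c)) (\<lambda>j. S j $$ (c, c))"
      using toeplitz_cross_cond_if_mult_block_toeplitz T S c by blast
    then show ?thesis
      using symbol[OF T(1) c] symbol[OF S(1) c] unfolding toeplitz_cross_cond_def by auto
  qed
  have "\<exists>a b. (a \<noteq> 0 \<or> b \<noteq> 0) \<and>
      (\<forall>M\<in>\<A>. \<forall>j\<in>{1..int n - 1}. a * diag_symbol d M j c = b * diag_symbol d M (j - int n) c)"
    if "c < d" for c
    by (rule exists_common_ratio) (use cross[OF _ _ that] in \<open>auto simp: toeplitz_cross_cond_def\<close>)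
  then obtain a b where ab: "\<And>c. c < d \<Longrightarrow> a c \<noteq> 0 \<or> b c \<noteq> 0"
    and ratio: "\<And>c M j. c < d \<Longrightarrow> M \<in> \<A> \<Longrightarrow> j \<in> {1..int n - 1} \<Longrightarrow>
      a c * diag_symbol d M j c = b c * diag_symbol d M (j - int n) c"
    by metis
  have "M \<in> F_set n d (diag_alg d) (mat_diag d a) (mat_diag d b)" if M: "M \<in> \<A>" for M
  proof -
    obtain T where T: "block_toeplitz_with n d T M" "diag_blocks n d T" using blocks M by blast
    have "shift_proportional n (a c) (b c) (\<lambda>j. T j $$ (c, c))" if c: "c < d" for c
      using ratio[OF c M] symbol[OF T(1) c] unfolding shift_proportional_def by auto
    then show ?thesis unfolding mem_F_set_mat_diag_iff using T by blast
  qed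
  then show ?thesis using ab by blast
qed

theorem corollary5p3:
  fixes n d :: nat and \<A> :: "complex mat set"
  assumes "n \<ge> 2" and "d \<ge> 1"
    and "maximal_algebra_in (n*d) (toeplitz_set n d (diag_alg d)) \<A>"
  shows "\<exists>A\<in>diag_alg d. \<exists>B\<in>diag_alg d. \<A> = F_set n d (diag_alg d) A B"
proof -
  have alg: "algebra_in (n*d) (toeplitz_set n d (diag_alg d)) \<A>"
    and max: "\<not> (\<exists>\<B>. algebra_in (n*d) (toeplitz_set n d (diag_alg d)) \<B> \<and> \<A> \<subset> \<B>)"
    using assms(3) unfolding maximal_algebra_in_def by auto
  obtain a b where ab: "\<forall>c<d. a c \<noteq> 0 \<or> b c \<noteq> 0"
    and sub: "\<A> \<subseteq> F_set n d (diag_alg d) (mat_diag d a) (mat_diag d b)"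
    using algebra_subset_F_set_mat_diag[OF alg] by blast
  have "algebra_in (n*d) (toeplitz_set n d (diag_alg d)) (F_set n d (diag_alg d) (mat_diag d a) (mat_diag d b))"
    using F_set_mat_diag_algebra ab by blast
  with sub max have "\<A> = F_set n d (diag_alg d) (mat_diag d a) (mat_diag d b)" by blast
  then show ?thesis using mat_diag_mem_diag_alg by blast
qed

end
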